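(* Let $d\ge1$, let $T>0$ be a finite random variable with $D\in\{1,\dots,d\}$, and let $\tilde T$ be a finite random variable with $0<\tilde T\le T$ and $\tilde D=D\,\mathbf 1\{\tilde T=T\}$. If the representativity property holds, i.e. $$P(T\le t,D=j\mid\tilde T>s)=P(T\le t,D=j\mid T>s)\quad\text{for all } t\ge0,\ s\in\mathcal J,\ j=1,\dots,d,$$ then the identifiability property holds, i.e. $\tilde H_j(t)=H_j(t)$ for all $t\in\mathcal J$ and $j=1,\dots,d$. The reverse implication does not hold: there exist such $(T,D,\tilde T,\tilde D)$ for which the identifiability property holds but the representativity property fails.
   Context: Functions of the event time: - $S(t)=P(T>t)$. - $F_j(t)=P(T\le t,D=j)$. - $H_j(t)=\int_{(0,t]}S(s-)^{-1}F_j(ds)$. Observed quantities: - $\tilde S(t)=P(\tilde T>t)$. - $\tilde F_j(t)=P(\tilde T\le t,\tilde D=j)$. - $\tilde H_j(t)=\int_{(0,t]}\tilde S(s-)^{-1}\tilde F_j(ds)$. - Division by $0$ occurs only on null sets of the integrator. - $\mathcal J=\{t\ge0:\tilde S(t)>0\}$. *)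

theory Defs
  imports "HOL-Probability.Probability"
begin

definition survival :: "'a measure \<Rightarrow> ('a \<Rightarrow> real) \<Rightarrow> real \<Rightarrow> real" where
  "survival M X t = measure M {\<omega> \<in> space M. X \<omega> > t}"

definition cif :: "'a measure \<Rightarrow> ('a \<Rightarrow> real) \<Rightarrow> ('a \<Rightarrow> nat) \<Rightarrow> nat \<Rightarrow> real \<Rightarrow> real" where
  "cif M X E j t = measure M {\<omega> \<in> space M. X \<omega> \<le> t \<and> E \<omega> = j}"

definition cumhaz :: "'a measure \<Rightarrow> ('a \<Rightarrow> real) \<Rightarrow> ('a \<Rightarrow> nat) \<Rightarrow> nat \<Rightarrow> real \<Rightarrow> real" where
  "cumhaz M X E j t =
     set_lebesgue_integral (interval_measure (cif M X E j)) {0<..t}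
       (\<lambda>s. 1 / Lim (at_left s) (survival M X))"

definition setting :: "nat \<Rightarrow> 'a measure \<Rightarrow> ('a \<Rightarrow> real) \<Rightarrow> ('a \<Rightarrow> nat)
    \<Rightarrow> ('a \<Rightarrow> real) \<Rightarrow> ('a \<Rightarrow> nat) \<Rightarrow> bool" where
  "setting d M T D Tt Dt \<longleftrightarrow>
     prob_space M \<and>
     T \<in> borel_measurable M \<and> Tt \<in> borel_measurable M \<and>
     D \<in> measurable M (count_space UNIV) \<and> Dt \<in> measurable M (count_space UNIV) \<and>
     (\<forall>\<omega>\<in>space M. 0 < T \<omega> \<and> D \<omega> \<in> {1..d} \<and> 0 < Tt \<omega> \<and> Tt \<omega> \<le> T \<omega> \<and>
        Dt \<omega> = D \<omega> * (if Tt \<omega> = T \<omega> then 1 else 0))"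

definition Jset :: "'a measure \<Rightarrow> ('a \<Rightarrow> real) \<Rightarrow> real set" where
  "Jset M Tt = {t. t \<ge> 0 \<and> survival M Tt t > 0}"

definition condprob :: "'a measure \<Rightarrow> 'a set \<Rightarrow> 'a set \<Rightarrow> real" where
  "condprob M A B = measure M (A \<inter> B) / measure M B"

definition representative :: "nat \<Rightarrow> 'a measure \<Rightarrow> ('a \<Rightarrow> real) \<Rightarrow> ('a \<Rightarrow> nat)
    \<Rightarrow> ('a \<Rightarrow> real) \<Rightarrow> bool" where
  "representative d M T D Tt \<longleftrightarrow>
     (\<forall>t s j. t \<ge> 0 \<and> s \<in> Jset M Tt \<and> j \<in> {1..d} \<longrightarrow>
        condprob M {\<omega>\<in>space M. T \<omega> \<le> t \<and> D \<omega> = j} {\<omega>\<in>space M. Tt \<omega> > s}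
        = condprob M {\<omega>\<in>space M. T \<omega> \<le> t \<and> D \<omega> = j} {\<omega>\<in>space M. T \<omega> > s})"

definition identifiable :: "nat \<Rightarrow> 'a measure \<Rightarrow> ('a \<Rightarrow> real) \<Rightarrow> ('a \<Rightarrow> nat)
    \<Rightarrow> ('a \<Rightarrow> real) \<Rightarrow> ('a \<Rightarrow> nat) \<Rightarrow> bool" where
  "identifiable d M T D Tt Dt \<longleftrightarrow>
     (\<forall>t j. t \<in> Jset M Tt \<and> j \<in> {1..d} \<longrightarrow> cumhaz M Tt Dt j t = cumhaz M T D j t)"

end

theory Submission
  imports Defs
begin

text \<open>The hazard H_j(t) of (X, E) is the expectation of 1{E = j, 0 < X \<le> t} / q(X), where
  q(s) = P(X \<ge> s). Since Dt = j exactly when D = j and Tt = T, both hazards are expectations over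
  {D = j} of functions of T, weighted by 1{Tt = T} / P(Tt \<ge> T) and by 1 / P(T \<ge> T) respectively.
  Representativity at a time s in J says that on {D = j} the law of T restricted to {Tt > s} is
  St(s) / S(s) times its law restricted to {T > s}. Applying this at the points of a grid just below
  T and letting the mesh tend to zero turns {Tt > s} into {Tt \<ge> T} = {Tt = T} and the factor
  St(s) / S(s) into P(Tt \<ge> T) / P(T \<ge> T), by dominated convergence; this turns one weight into
  the other. For the converse, on a two-point space on which every observation is censored before
  the first event time both hazards vanish on J, yet representativity fails.\<close>

text \<open>The largest multiple of 1 / (n + 1) strictly below s.\<close>
definition grid_below :: "nat \<Rightarrow> real \<Rightarrow> real" where
  "grid_below n s = (of_int \<lceil>s * real (Suc n)\<rceil> - 1) / real (Suc n)"

lemma borel_measurable_grid_below[measurable]: "grid_below n \<in> borel_measurable borel"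
  unfolding grid_below_def by measurable

lemma grid_below_less: "grid_below n s < s"
proof -
  have "of_int \<lceil>s * real (Suc n)\<rceil> - 1 < s * real (Suc n)" by linarith
  then show ?thesis unfolding grid_below_def by (simp add: divide_less_eq)
qed

lemma grid_below_ge: "s - 1 / real (Suc n) \<le> grid_below n s"
proof -
  have "s * real (Suc n) - 1 \<le> of_int \<lceil>s * real (Suc n)\<rceil> - 1" by linarith
  then have "(s * real (Suc n) - 1) / real (Suc n) \<le> grid_below n s"
    unfolding grid_below_def by (intro divide_right_mono) auto
  then show ?thesis by (simp add: field_simps)
qed

lemma grid_below_nonneg: "0 < s \<Longrightarrow> 0 \<le> grid_below n s"
proof -
  assume "0 < s"
  then have "1 \<le> \<lceil>s * real (Suc n)\<rceil>" by simp
  then show ?thesis unfolding grid_below_def by simp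
qed

lemma LIMSEQ_grid_below: "(\<lambda>n. grid_below n s) \<longlonglongrightarrow> s"
proof (rule tendsto_sandwich[of "\<lambda>n. s - 1 / real (Suc n)" _ _ "\<lambda>n. s"])
  have "(\<lambda>n. s - 1 / real (Suc n)) \<longlonglongrightarrow> s - 0"
    by (intro tendsto_diff tendsto_const LIMSEQ_Suc[OF lim_const_over_n])
  then show "(\<lambda>n. s - 1 / real (Suc n)) \<longlonglongrightarrow> s" by simp
  show "\<forall>\<^sub>F n in sequentially. s - 1 / real (Suc n) \<le> grid_below n s"
    by (intro always_eventually allI grid_below_ge)
  show "\<forall>\<^sub>F n in sequentially. grid_below n s \<le> s"
    by (intro always_eventually allI less_imp_le grid_below_less)
qed simp

lemma filterlim_grid_below_at_left: "filterlim (\<lambda>n. grid_below n s) (at_left s) sequentially"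
  unfolding filterlim_at
  by (auto intro: always_eventually LIMSEQ_grid_below simp: grid_below_less less_imp_neq)

lemma finite_image_grid_below: "finite (grid_below n ` {0<..t})"
proof (rule finite_subset)
  show "grid_below n ` {0<..t} \<subseteq> (\<lambda>k. (of_int k - 1) / real (Suc n)) ` {1..\<lceil>t * real (Suc n)\<rceil>}"
  proof
    fix v assume "v \<in> grid_below n ` {0<..t}"
    then obtain s where s: "0 < s" "s \<le> t" "v = grid_below n s" by auto
    have "1 \<le> \<lceil>s * real (Suc n)\<rceil>" using s(1) by simp
    moreover have "\<lceil>s * real (Suc n)\<rceil> \<le> \<lceil>t * real (Suc n)\<rceil>"
      using s(2) by (intro ceiling_mono mult_right_mono) auto
    ultimately show "v \<in> (\<lambda>k. (of_int k - 1) / real (Suc n)) ` {1..\<lceil>t * real (Suc n)\<rceil>}"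
      using s(3) unfolding grid_below_def by auto
  qed
qed simp

lemma borel_measurable_antimono:
  fixes f :: "real \<Rightarrow> real"
  assumes "antimono f"
  shows "f \<in> borel_measurable borel"
proof -
  have "(\<lambda>x. - f x) \<in> borel_measurable borel"
    using assms by (intro borel_measurable_mono) (auto simp: mono_def antimono_def)
  then have "(\<lambda>x. - (- f x)) \<in> borel_measurable borel" by measurable
  then show ?thesis by simp
qed

definition weighted_distr :: "'a measure \<Rightarrow> ('a \<Rightarrow> real) \<Rightarrow> ('a \<Rightarrow> real) \<Rightarrow> real measure" where
  "weighted_distr M g X = distr (density M (\<lambda>\<omega>. ennreal (g \<omega>))) borel X"

context prob_space
begin

lemma sets_weighted_distr[simp]: "sets (weighted_distr M g X) = sets borel"
  by (simp add: weighted_distr_def)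

lemma integral_weighted_distr:
  assumes [measurable]: "g \<in> borel_measurable M" "X \<in> borel_measurable M" "f \<in> borel_measurable borel"
    and "\<And>\<omega>. \<omega> \<in> space M \<Longrightarrow> 0 \<le> g \<omega>"
  shows "integral\<^sup>L (weighted_distr M g X) f = (\<integral>\<omega>. g \<omega> * f (X \<omega>) \<partial>M)"
proof -
  have "integral\<^sup>L (weighted_distr M g X) f
      = integral\<^sup>L (density M (\<lambda>\<omega>. ennreal (g \<omega>))) (\<lambda>\<omega>. f (X \<omega>))"
    unfolding weighted_distr_def by (rule integral_distr) auto
  also have "\<dots> = (\<integral>\<omega>. g \<omega> *\<^sub>R f (X \<omega>) \<partial>M)"
    by (rule integral_density) (auto simp: assms(4))
  finally show ?thesis by simp
qed

lemma finite_borel_measure_weighted_distr: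
  assumes [measurable]: "g \<in> borel_measurable M" "X \<in> borel_measurable M"
    and bounded: "\<And>\<omega>. \<omega> \<in> space M \<Longrightarrow> 0 \<le> g \<omega> \<and> g \<omega> \<le> B"
  shows "finite_borel_measure (weighted_distr M g X)"
proof -
  have "emeasure (density M (\<lambda>\<omega>. ennreal (g \<omega>))) (space M) = (\<integral>\<^sup>+\<omega>. ennreal (g \<omega>) \<partial>M)"
    by (subst emeasure_density) (auto intro!: nn_integral_cong)
  also have "\<dots> \<le> (\<integral>\<^sup>+\<omega>. ennreal B \<partial>M)"
    using bounded by (intro nn_integral_mono) (auto intro!: ennreal_leI)
  also have "\<dots> < \<infinity>" by (simp add: emeasure_space_1)
  finally have "emeasure (weighted_distr M g X) (space (weighted_distr M g X)) < \<infinity>"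
    unfolding weighted_distr_def by (simp add: emeasure_distr)
  then interpret finite_measure "weighted_distr M g X" by (intro finite_measureI) auto
  show ?thesis by unfold_locales simp
qed

lemma cdf_weighted_distr:
  assumes [measurable]: "g \<in> borel_measurable M" "X \<in> borel_measurable M"
    and bounded: "\<And>\<omega>. \<omega> \<in> space M \<Longrightarrow> 0 \<le> g \<omega> \<and> g \<omega> \<le> B"
  shows "cdf (weighted_distr M g X) x = (\<integral>\<omega>. g \<omega> * indicator {..x} (X \<omega>) \<partial>M)"
proof -
  interpret finite_borel_measure "weighted_distr M g X"
    by (rule finite_borel_measure_weighted_distr[OF assms])
  have "cdf (weighted_distr M g X) x = integral\<^sup>L (weighted_distr M g X) (indicator {..x})"
    by (simp add: cdf_def borel_UNIV)
  also have "\<dots> = (\<integral>\<omega>. g \<omega> * indicator {..x} (X \<omega>) \<partial>M)"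
    by (rule integral_weighted_distr) (use bounded in auto)
  finally show ?thesis .
qed

lemma weighted_distr_eqI:
  assumes [measurable]: "g\<^sub>1 \<in> borel_measurable M" "g\<^sub>2 \<in> borel_measurable M" "X \<in> borel_measurable M"
    and "\<And>\<omega>. \<omega> \<in> space M \<Longrightarrow> 0 \<le> g\<^sub>1 \<omega> \<and> g\<^sub>1 \<omega> \<le> B"
    and "\<And>\<omega>. \<omega> \<in> space M \<Longrightarrow> 0 \<le> g\<^sub>2 \<omega> \<and> g\<^sub>2 \<omega> \<le> B"
    and "\<And>x. (\<integral>\<omega>. g\<^sub>1 \<omega> * indicator {..x} (X \<omega>) \<partial>M) = (\<integral>\<omega>. g\<^sub>2 \<omega> * indicator {..x} (X \<omega>) \<partial>M)"
  shows "weighted_distr M g\<^sub>1 X = weighted_distr M g\<^sub>2 X"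
proof (rule cdf_unique')
  show "finite_borel_measure (weighted_distr M g\<^sub>1 X)" "finite_borel_measure (weighted_distr M g\<^sub>2 X)"
    by (rule finite_borel_measure_weighted_distr[OF _ _ assms(4)]; measurable)
       (rule finite_borel_measure_weighted_distr[OF _ _ assms(5)]; measurable)
  show "cdf (weighted_distr M g\<^sub>1 X) = cdf (weighted_distr M g\<^sub>2 X)"
    using assms(6)
    by (simp add: fun_eq_iff cdf_weighted_distr[OF assms(1,3,4)] cdf_weighted_distr[OF assms(2,3,5)])
qed

lemma integral_indicator_mult_indicator_atMost:
  fixes X :: "'a \<Rightarrow> real"
  shows "(\<integral>\<omega>. indicator {\<omega>\<in>space M. P \<omega>} \<omega> * indicator {..x} (X \<omega>) \<partial>M)
     = prob {\<omega>\<in>space M. X \<omega> \<le> x \<and> P \<omega>}"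
proof -
  have "(\<integral>\<omega>. indicator {\<omega>\<in>space M. P \<omega>} \<omega> * indicator {..x} (X \<omega>) \<partial>M)
     = ((\<integral>\<omega>. indicator {\<omega>\<in>space M. X \<omega> \<le> x \<and> P \<omega>} \<omega> \<partial>M) :: real)"
    by (rule Bochner_Integration.integral_cong) (auto simp: indicator_def)
  then show ?thesis by (simp add: Int_absorb2)
qed

lemma survival_tendsto_at_left:
  assumes [measurable]: "X \<in> borel_measurable M"
  shows "(survival M X \<longlongrightarrow> prob {\<omega>\<in>space M. s \<le> X \<omega>}) (at_left s)"
proof -
  interpret X: real_distribution "distr M borel X" by simp
  have "survival M X = (\<lambda>u. 1 - cdf (distr M borel X) u)"
  proof
    fix u
    have "cdf (distr M borel X) u = prob {\<omega>\<in>space M. X \<omega> \<le> u}"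
      by (simp add: cdf_def measure_distr vimage_def Int_def conj_commute)
    moreover have "{\<omega>\<in>space M. X \<omega> > u} = space M - {\<omega>\<in>space M. X \<omega> \<le> u}" by auto
    ultimately show "survival M X u = 1 - cdf (distr M borel X) u"
      unfolding survival_def by (simp add: prob_compl)
  qed
  moreover have "{\<omega>\<in>space M. s \<le> X \<omega>} = space M - {\<omega>\<in>space M. X \<omega> < s}" by auto
  then have "prob {\<omega>\<in>space M. s \<le> X \<omega>} = 1 - prob {\<omega>\<in>space M. X \<omega> < s}"
    by (simp only:) (rule prob_compl, measurable)
  ultimately show ?thesis
    using tendsto_diff[OF tendsto_const[of 1] X.cdf_at_left[of s]]
    by (simp add: measure_distr vimage_def Int_def conj_commute)
qed

lemma antimono_prob_le:
  fixes X :: "'a \<Rightarrow> real"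
  assumes [measurable]: "X \<in> borel_measurable M"
  shows "antimono (\<lambda>s. prob {\<omega>\<in>space M. s \<le> X \<omega>})"
proof (rule antimonoI)
  fix x y :: real
  assume "x \<le> y"
  then show "prob {\<omega>\<in>space M. y \<le> X \<omega>} \<le> prob {\<omega>\<in>space M. x \<le> X \<omega>}"
    by (intro finite_measure_mono) auto
qed

lemma antimono_survival:
  assumes [measurable]: "X \<in> borel_measurable M"
  shows "antimono (survival M X)"
  unfolding survival_def by (auto simp: antimono_def intro!: finite_measure_mono)

lemma borel_measurable_prob_le[measurable]:
  fixes X :: "'a \<Rightarrow> real"
  assumes "X \<in> borel_measurable M"
  shows "(\<lambda>s. prob {\<omega>\<in>space M. s \<le> X \<omega>}) \<in> borel_measurable borel"
  by (rule borel_measurable_antimono[OF antimono_prob_le[OF assms]])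

lemma borel_measurable_survival[measurable]:
  assumes "X \<in> borel_measurable M"
  shows "survival M X \<in> borel_measurable borel"
  by (rule borel_measurable_antimono[OF antimono_survival[OF assms]])

lemma grid_below_mem_Jset:
  assumes "X \<in> borel_measurable M" and "t \<in> Jset M X" and "0 < s" "s \<le> t"
  shows "grid_below n s \<in> Jset M X"
proof -
  have "0 \<le> grid_below n s" "grid_below n s \<le> t"
    using assms(3,4) grid_below_nonneg grid_below_less[of n s] by auto
  then show ?thesis
    using assms(2) antimonoD[OF antimono_survival[OF assms(1)] \<open>grid_below n s \<le> t\<close>]
    by (simp add: Jset_def)
qed

lemma interval_measure_cif:
  assumes [measurable]: "X \<in> borel_measurable M" "E \<in> measurable M (count_space UNIV)"
  shows "interval_measure (cif M X E j) = weighted_distr M (indicator {\<omega>\<in>space M. E \<omega> = j}) X"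
proof -
  let ?N = "weighted_distr M (indicator {\<omega>\<in>space M. E \<omega> = j}) X"
  interpret N: finite_borel_measure ?N
    by (rule finite_borel_measure_weighted_distr[where B=1]) auto
  have cif: "cif M X E j = cdf ?N"
  proof
    fix x
    have "cdf ?N x = (\<integral>\<omega>. indicator {\<omega>\<in>space M. E \<omega> = j} \<omega> * indicator {..x} (X \<omega>) \<partial>M)"
      by (rule cdf_weighted_distr[where B=1]) auto
    then show "cif M X E j x = cdf ?N x"
      by (simp add: cif_def integral_indicator_mult_indicator_atMost)
  qed
  have "finite_borel_measure (interval_measure (cdf ?N))"
    by (rule finite_borel_measure_interval_measure[where m="measure ?N (space ?N)"])
       (auto intro: N.cdf_nondecreasing N.cdf_is_right_cont N.cdf_lim_at_bot N.cdf_lim_at_top)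
  moreover have "cdf (interval_measure (cdf ?N)) = cdf ?N"
    by (rule cdf_interval_measure)
       (auto intro: N.cdf_nondecreasing N.cdf_is_right_cont N.cdf_lim_at_bot)
  ultimately show ?thesis
    unfolding cif by (rule cdf_unique'[OF _ N.finite_borel_measure_axioms])
qed

lemma cumhaz_eq_integral:
  assumes [measurable]: "X \<in> borel_measurable M" "E \<in> measurable M (count_space UNIV)"
  shows "cumhaz M X E j t = (\<integral>\<omega>. indicator {\<omega>\<in>space M. E \<omega> = j} \<omega> *
     (indicator {0<..t} (X \<omega>) / prob {\<omega>'\<in>space M. X \<omega> \<le> X \<omega>'}) \<partial>M)"
proof -
  have "Lim (at_left s) (survival M X) = prob {\<omega>\<in>space M. s \<le> X \<omega>}" for s
    by (rule tendsto_Lim[OF _ survival_tendsto_at_left]) simp_all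
  then have "cumhaz M X E j t = set_lebesgue_integral
      (weighted_distr M (indicator {\<omega>\<in>space M. E \<omega> = j}) X) {0<..t}
      (\<lambda>s. 1 / prob {\<omega>\<in>space M. s \<le> X \<omega>})"
    unfolding cumhaz_def interval_measure_cif[OF assms] by simp
  also have "\<dots> = (\<integral>\<omega>. indicator {\<omega>\<in>space M. E \<omega> = j} \<omega> *
     (indicator {0<..t} (X \<omega>) / prob {\<omega>'\<in>space M. X \<omega> \<le> X \<omega>'}) \<partial>M)"
    unfolding set_lebesgue_integral_def by (subst integral_weighted_distr) auto
  finally show ?thesis .
qed

context
  fixes T Tt :: "'a \<Rightarrow> real" and D :: "'a \<Rightarrow> nat"
  assumes T_measurable[measurable]: "T \<in> borel_measurable M"
    and Tt_measurable[measurable]: "Tt \<in> borel_measurable M"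
    and D_measurable[measurable]: "D \<in> measurable M (count_space UNIV)"
    and censored_le: "\<And>\<omega>. \<omega> \<in> space M \<Longrightarrow> Tt \<omega> \<le> T \<omega>"
begin

lemma survival_ratio_bounds:
  "0 \<le> survival M Tt u / survival M T u \<and> survival M Tt u / survival M T u \<le> 1"
proof -
  have "survival M Tt u \<le> survival M T u"
    unfolding survival_def using censored_le by (intro finite_measure_mono) (auto intro: less_le_trans)
  then show ?thesis
    by (auto simp: survival_def divide_le_eq_1 less_le)
qed

lemma tendsto_integral_grid_below_censored:
  fixes f :: "real \<Rightarrow> real"
  assumes [measurable]: "f \<in> borel_measurable borel" and f_bounded: "\<And>s. \<bar>f s\<bar> \<le> B"
  shows "(\<lambda>n. \<integral>\<omega>. indicator {\<omega>\<in>space M. D \<omega> = j \<and> grid_below n (T \<omega>) < Tt \<omega>} \<omega> * f (T \<omega>) \<partial>M)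
    \<longlonglongrightarrow> (\<integral>\<omega>. indicator {\<omega>\<in>space M. D \<omega> = j \<and> Tt \<omega> = T \<omega>} \<omega> * f (T \<omega>) \<partial>M)"
    (is "(\<lambda>n. \<integral>\<omega>. ?g n \<omega> \<partial>M) \<longlonglongrightarrow> (\<integral>\<omega>. ?h \<omega> \<partial>M)")
proof (rule integral_dominated_convergence[where w="\<lambda>_. B"])
  have "(\<lambda>n. ?g n \<omega>) \<longlonglongrightarrow> ?h \<omega>" if \<omega>: "\<omega> \<in> space M" for \<omega>
  proof (cases "Tt \<omega> = T \<omega>")
    case True
    then show ?thesis by (simp add: grid_below_less indicator_def)
  next
    case False
    then have "Tt \<omega> < T \<omega>" using censored_le[OF \<omega>] by simp
    then have "\<forall>\<^sub>F n in sequentially. Tt \<omega> < grid_below n (T \<omega>)"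
      by (rule order_tendstoD(1)[OF LIMSEQ_grid_below])
    then have "\<forall>\<^sub>F n in sequentially. ?g n \<omega> = ?h \<omega>"
      by eventually_elim (use False in \<open>auto simp: indicator_def\<close>)
    then show ?thesis by (rule tendsto_eventually)
  qed
  then show "AE \<omega> in M. (\<lambda>n. ?g n \<omega>) \<longlonglongrightarrow> ?h \<omega>"
    by (rule AE_I2)
  show "AE \<omega> in M. norm (?g n \<omega>) \<le> B" for n
    using f_bounded order_trans[OF abs_ge_zero f_bounded]
    by (intro AE_I2) (auto simp: indicator_def abs_mult)
qed auto

lemma tendsto_integral_grid_below_survival_ratio:
  fixes f :: "real \<Rightarrow> real"
  assumes [measurable]: "f \<in> borel_measurable borel" and f_bounded: "\<And>s. \<bar>f s\<bar> \<le> B"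
    and f_support: "\<And>s. f s \<noteq> 0 \<Longrightarrow> 0 < prob {\<omega>\<in>space M. s \<le> T \<omega>}"
  shows "(\<lambda>n. \<integral>\<omega>. indicator {\<omega>\<in>space M. D \<omega> = j} \<omega> *
      (survival M Tt (grid_below n (T \<omega>)) / survival M T (grid_below n (T \<omega>)) * f (T \<omega>)) \<partial>M)
    \<longlonglongrightarrow> (\<integral>\<omega>. indicator {\<omega>\<in>space M. D \<omega> = j} \<omega> *
      (prob {\<omega>'\<in>space M. T \<omega> \<le> Tt \<omega>'} / prob {\<omega>'\<in>space M. T \<omega> \<le> T \<omega>'} * f (T \<omega>)) \<partial>M)"
    (is "(\<lambda>n. \<integral>\<omega>. ?g n \<omega> \<partial>M) \<longlonglongrightarrow> (\<integral>\<omega>. ?h \<omega> \<partial>M)")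
proof (rule integral_dominated_convergence[where w="\<lambda>_. B"])
  have "(\<lambda>n. ?g n \<omega>) \<longlonglongrightarrow> ?h \<omega>" for \<omega>
  proof (cases "f (T \<omega>) = 0")
    case False
    have "(\<lambda>n. survival M X (grid_below n (T \<omega>))) \<longlonglongrightarrow> prob {\<omega>'\<in>space M. T \<omega> \<le> X \<omega>'}"
      if "X \<in> borel_measurable M" for X
      by (rule filterlim_compose[OF survival_tendsto_at_left[OF that] filterlim_grid_below_at_left])
    then show ?thesis
      using f_support[OF False] by (intro tendsto_intros) auto
  qed simp
  then show "AE \<omega> in M. (\<lambda>n. ?g n \<omega>) \<longlonglongrightarrow> ?h \<omega>"
    by simp
  show "AE \<omega> in M. norm (?g n \<omega>) \<le> B" for n
  proof (rule AE_I2)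
    fix \<omega>
    let ?r = "survival M Tt (grid_below n (T \<omega>)) / survival M T (grid_below n (T \<omega>))"
    have "\<bar>?r\<bar> \<le> 1"
      using survival_ratio_bounds by (metis abs_of_nonneg)
    then have "\<bar>?r * f (T \<omega>)\<bar> \<le> 1 * B"
      unfolding abs_mult using f_bounded by (intro mult_mono) auto
    then show "norm (?g n \<omega>) \<le> B"
      using order_trans[OF abs_ge_zero f_bounded] by (auto simp: indicator_def)
  qed
qed auto

context
  fixes d j :: nat
  assumes representative: "representative d M T D Tt" and j: "j \<in> {1..d}"
begin

lemma prob_representative:
  assumes sJ: "s \<in> Jset M Tt"
  shows "prob {\<omega>\<in>space M. T \<omega> \<le> x \<and> (D \<omega> = j \<and> s < Tt \<omega>)}
    = survival M Tt s / survival M T s * prob {\<omega>\<in>space M. T \<omega> \<le> x \<and> (D \<omega> = j \<and> s < T \<omega>)}"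
proof (cases "0 \<le> x")
  case True
  let ?A = "{\<omega>\<in>space M. T \<omega> \<le> x \<and> D \<omega> = j}"
  have "condprob M ?A {\<omega>\<in>space M. Tt \<omega> > s} = condprob M ?A {\<omega>\<in>space M. T \<omega> > s}"
    using representative True j sJ unfolding representative_def by blast
  moreover have "?A \<inter> {\<omega>\<in>space M. Tt \<omega> > s} = {\<omega>\<in>space M. T \<omega> \<le> x \<and> (D \<omega> = j \<and> s < Tt \<omega>)}"
    "?A \<inter> {\<omega>\<in>space M. T \<omega> > s} = {\<omega>\<in>space M. T \<omega> \<le> x \<and> (D \<omega> = j \<and> s < T \<omega>)}"
    by auto
  moreover have "0 < survival M Tt s" "survival M Tt s \<le> survival M T s"
    using sJ censored_le unfolding Jset_def survival_def
    by (auto intro!: finite_measure_mono intro: less_le_trans)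
  ultimately show ?thesis
    by (simp add: condprob_def survival_def field_simps)
next
  case False
  have "0 \<le> s" using sJ by (simp add: Jset_def)
  then have "\<not> (T \<omega> \<le> x \<and> s < Tt \<omega>)" "\<not> (T \<omega> \<le> x \<and> s < T \<omega>)" if "\<omega> \<in> space M" for \<omega>
    using censored_le[OF that] False by linarith+
  then have "{\<omega>\<in>space M. T \<omega> \<le> x \<and> (D \<omega> = j \<and> s < Tt \<omega>)} = {}"
    "{\<omega>\<in>space M. T \<omega> \<le> x \<and> (D \<omega> = j \<and> s < T \<omega>)} = {}"
    by blast+
  then show ?thesis by (simp only: measure_empty mult_zero_right)
qed

lemma weighted_distr_representative:
  assumes sJ: "s \<in> Jset M Tt"
  shows "weighted_distr M (indicator {\<omega>\<in>space M. D \<omega> = j \<and> s < Tt \<omega>}) T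
    = weighted_distr M
        (\<lambda>\<omega>. survival M Tt s / survival M T s * indicator {\<omega>\<in>space M. D \<omega> = j \<and> s < T \<omega>} \<omega>) T"
proof (rule weighted_distr_eqI[where B=1])
  let ?c = "survival M Tt s / survival M T s"
  show "0 \<le> ?c * indicator {\<omega>\<in>space M. D \<omega> = j \<and> s < T \<omega>} \<omega> \<and>
      ?c * indicator {\<omega>\<in>space M. D \<omega> = j \<and> s < T \<omega>} \<omega> \<le> 1" for \<omega>
    using survival_ratio_bounds[of s] by (auto simp: indicator_def)
  show "(\<integral>\<omega>. indicator {\<omega>\<in>space M. D \<omega> = j \<and> s < Tt \<omega>} \<omega> * indicator {..x} (T \<omega>) \<partial>M)
      = (\<integral>\<omega>. ?c * indicator {\<omega>\<in>space M. D \<omega> = j \<and> s < T \<omega>} \<omega> * indicator {..x} (T \<omega>) \<partial>M)" for x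
    by (simp only: mult.assoc integral_mult_right_zero integral_indicator_mult_indicator_atMost
        prob_representative[OF sJ])
qed auto

lemma integral_representative:
  assumes sJ: "s \<in> Jset M Tt" and [measurable]: "\<phi> \<in> borel_measurable borel"
  shows "(\<integral>\<omega>. indicator {\<omega>\<in>space M. D \<omega> = j \<and> s < Tt \<omega>} \<omega> * \<phi> (T \<omega>) \<partial>M)
    = survival M Tt s / survival M T s *
      (\<integral>\<omega>. indicator {\<omega>\<in>space M. D \<omega> = j \<and> s < T \<omega>} \<omega> * \<phi> (T \<omega>) \<partial>M)"
proof -
  let ?c = "survival M Tt s / survival M T s"
  have "(\<integral>\<omega>. indicator {\<omega>\<in>space M. D \<omega> = j \<and> s < Tt \<omega>} \<omega> * \<phi> (T \<omega>) \<partial>M)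
      = integral\<^sup>L (weighted_distr M (indicator {\<omega>\<in>space M. D \<omega> = j \<and> s < Tt \<omega>}) T) \<phi>"
    by (rule integral_weighted_distr[symmetric]) (auto simp: T_measurable)
  also have "\<dots> = integral\<^sup>L (weighted_distr M
      (\<lambda>\<omega>. ?c * indicator {\<omega>\<in>space M. D \<omega> = j \<and> s < T \<omega>} \<omega>) T) \<phi>"
    by (simp only: weighted_distr_representative[OF sJ])
  also have "\<dots> = (\<integral>\<omega>. ?c * indicator {\<omega>\<in>space M. D \<omega> = j \<and> s < T \<omega>} \<omega> * \<phi> (T \<omega>) \<partial>M)"
    by (rule integral_weighted_distr) (use survival_ratio_bounds[of s] in \<open>auto simp: indicator_def\<close>)
  finally show ?thesis by (simp add: mult.assoc)
qed

lemma integral_grid_below_eq: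
  fixes f :: "real \<Rightarrow> real"
  assumes tJ: "t \<in> Jset M Tt" and [measurable]: "f \<in> borel_measurable borel"
    and f_bounded: "\<And>s. \<bar>f s\<bar> \<le> B" and f_support: "\<And>s. s \<notin> {0<..t} \<Longrightarrow> f s = 0"
  shows "(\<integral>\<omega>. indicator {\<omega>\<in>space M. D \<omega> = j \<and> grid_below n (T \<omega>) < Tt \<omega>} \<omega> * f (T \<omega>) \<partial>M)
    = (\<integral>\<omega>. indicator {\<omega>\<in>space M. D \<omega> = j} \<omega> *
        (survival M Tt (grid_below n (T \<omega>)) / survival M T (grid_below n (T \<omega>)) * f (T \<omega>)) \<partial>M)"
    (is "(\<integral>\<omega>. ?lhs \<omega> \<partial>M) = (\<integral>\<omega>. ?rhs \<omega> \<partial>M)")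
proof -
  define c where "c u = survival M Tt u / survival M T u" for u
  define V where "V = grid_below n ` {0<..t}"
  define \<phi> where "\<phi> v s = indicator {s. grid_below n s = v} s * f s" for v s :: real
  have [measurable]: "\<phi> v \<in> borel_measurable borel" for v
    unfolding \<phi>_def by measurable
  have "finite V"
    unfolding V_def by (rule finite_image_grid_below)
  have f_V: "f s = 0" if "grid_below n s \<notin> V" for s
    using that by (intro f_support) (auto simp: V_def)
  txt \<open>Splitting along the grid cells of T reduces the claim to representativity at the finitely
    many grid points.\<close>
  have split_lhs: "?lhs \<omega> = (\<Sum>v\<in>V. indicator {\<omega>\<in>space M. D \<omega> = j \<and> v < Tt \<omega>} \<omega> * \<phi> v (T \<omega>))" for \<omega>
  proof -
    have "(\<Sum>v\<in>V. indicator {\<omega>\<in>space M. D \<omega> = j \<and> v < Tt \<omega>} \<omega> * \<phi> v (T \<omega>))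
      = (\<Sum>v\<in>V. if grid_below n (T \<omega>) = v then ?lhs \<omega> else 0)"
      by (rule sum.cong) (auto simp: \<phi>_def indicator_def)
    then show ?thesis
      using \<open>finite V\<close> f_V[of "T \<omega>"] by simp
  qed
  have split_rhs: "?rhs \<omega> = (\<Sum>v\<in>V. c v * (indicator {\<omega>\<in>space M. D \<omega> = j \<and> v < T \<omega>} \<omega> * \<phi> v (T \<omega>)))"
    for \<omega>
  proof -
    have "(\<Sum>v\<in>V. c v * (indicator {\<omega>\<in>space M. D \<omega> = j \<and> v < T \<omega>} \<omega> * \<phi> v (T \<omega>)))
      = (\<Sum>v\<in>V. if grid_below n (T \<omega>) = v then ?rhs \<omega> else 0)"
      by (rule sum.cong) (auto simp: \<phi>_def c_def indicator_def grid_below_less)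
    then show ?thesis
      using \<open>finite V\<close> f_V[of "T \<omega>"] by simp
  qed
  have integrable: "integrable M (\<lambda>\<omega>. indicator {\<omega>\<in>space M. D \<omega> = j \<and> v < X \<omega>} \<omega> * \<phi> v (T \<omega>))"
    if [measurable]: "X \<in> borel_measurable M" for v X
    using f_bounded order_trans[OF abs_ge_zero f_bounded]
    by (intro integrable_const_bound[where B=B] AE_I2) (auto simp: \<phi>_def indicator_def)
  have "(\<integral>\<omega>. ?lhs \<omega> \<partial>M) = (\<Sum>v\<in>V. \<integral>\<omega>. indicator {\<omega>\<in>space M. D \<omega> = j \<and> v < Tt \<omega>} \<omega> * \<phi> v (T \<omega>) \<partial>M)"
    unfolding split_lhs by (intro Bochner_Integration.integral_sum integrable) measurable
  also have "\<dots> = (\<Sum>v\<in>V. c v * (\<integral>\<omega>. indicator {\<omega>\<in>space M. D \<omega> = j \<and> v < T \<omega>} \<omega> * \<phi> v (T \<omega>) \<partial>M))"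
    unfolding c_def using tJ
    by (intro sum.cong refl integral_representative) (auto simp: V_def intro: grid_below_mem_Jset)
  also have "\<dots> = (\<integral>\<omega>. ?rhs \<omega> \<partial>M)"
    unfolding split_rhs by (subst Bochner_Integration.integral_sum) (auto intro: integrable)
  finally show ?thesis .
qed

lemma integral_uncensored_eq:
  assumes tJ: "t \<in> Jset M Tt"
  shows "(\<integral>\<omega>. indicator {\<omega>\<in>space M. D \<omega> = j \<and> Tt \<omega> = T \<omega>} \<omega> *
            (indicator {0<..t} (T \<omega>) / prob {\<omega>'\<in>space M. T \<omega> \<le> Tt \<omega>'}) \<partial>M)
       = (\<integral>\<omega>. indicator {\<omega>\<in>space M. D \<omega> = j} \<omega> *
            (indicator {0<..t} (T \<omega>) / prob {\<omega>'\<in>space M. T \<omega> \<le> T \<omega>'}) \<partial>M)"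
proof -
  let ?q = "\<lambda>X s. prob {\<omega>\<in>space M. s \<le> X \<omega>}"
  define f where "f s = indicator {0<..t} s / ?q Tt s" for s
  have [measurable]: "f \<in> borel_measurable borel"
    unfolding f_def by measurable
  have St_pos: "0 < survival M Tt t"
    using tJ by (simp add: Jset_def)
  have q_ge: "survival M Tt t \<le> ?q Tt s" "?q Tt s \<le> ?q T s" if "s \<le> t" for s
    using that censored_le unfolding survival_def
    by (auto intro!: finite_measure_mono intro: order_trans)
  have f_bounded: "\<bar>f s\<bar> \<le> 1 / survival M Tt t" for s
  proof (cases "s \<in> {0<..t}")
    case True
    then show ?thesis using St_pos q_ge[of s] by (simp add: f_def frac_le)
  qed (use St_pos in \<open>simp add: f_def\<close>)
  have f_support: "f s = 0" if "s \<notin> {0<..t}" for s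
    using that by (simp add: f_def)
  have f_pos: "0 < ?q T s" if "f s \<noteq> 0" for s
    using that f_support St_pos q_ge[of s] by fastforce
  have grid_eq: "(\<integral>\<omega>. indicator {\<omega>\<in>space M. D \<omega> = j \<and> grid_below n (T \<omega>) < Tt \<omega>} \<omega> * f (T \<omega>) \<partial>M)
      = (\<integral>\<omega>. indicator {\<omega>\<in>space M. D \<omega> = j} \<omega> *
          (survival M Tt (grid_below n (T \<omega>)) / survival M T (grid_below n (T \<omega>)) * f (T \<omega>)) \<partial>M)"
    for n by (rule integral_grid_below_eq[OF tJ _ f_bounded f_support]) measurable
  have "(\<integral>\<omega>. indicator {\<omega>\<in>space M. D \<omega> = j \<and> Tt \<omega> = T \<omega>} \<omega> * f (T \<omega>) \<partial>M)
      = (\<integral>\<omega>. indicator {\<omega>\<in>space M. D \<omega> = j} \<omega> * (?q Tt (T \<omega>) / ?q T (T \<omega>) * f (T \<omega>)) \<partial>M)"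
    by (rule LIMSEQ_unique[OF tendsto_integral_grid_below_censored[where f=f and j=j]
          tendsto_integral_grid_below_survival_ratio[where f=f and j=j, folded grid_eq]];
        (rule f_bounded f_pos)?; measurable)
  moreover have "?q Tt s / ?q T s * f s = indicator {0<..t} s / ?q T s" for s
    using St_pos q_ge[of s] by (cases "s \<in> {0<..t}") (auto simp: f_def)
  ultimately show ?thesis
    by (simp add: f_def)
qed

end

end

end

lemma representative_imp_identifiable:
  assumes setting: "setting d M T D Tt Dt" and rep: "representative d M T D Tt"
  shows "identifiable d M T D Tt Dt"
  unfolding identifiable_def
proof (intro allI impI, elim conjE)
  interpret prob_space M
    using setting by (simp add: setting_def)
  have [measurable]: "T \<in> borel_measurable M" "Tt \<in> borel_measurable M"
    "D \<in> measurable M (count_space UNIV)" "Dt \<in> measurable M (count_space UNIV)"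
    using setting by (auto simp: setting_def)
  have on_space: "\<And>\<omega>. \<omega> \<in> space M \<Longrightarrow> Tt \<omega> \<le> T \<omega> \<and>
      Dt \<omega> = D \<omega> * (if Tt \<omega> = T \<omega> then 1 else 0)"
    using setting by (simp add: setting_def)
  fix t j
  assume tJ: "t \<in> Jset M Tt" and j: "j \<in> {1..d}"
  have "cumhaz M Tt Dt j t = (\<integral>\<omega>. indicator {\<omega>\<in>space M. Dt \<omega> = j} \<omega> *
      (indicator {0<..t} (Tt \<omega>) / prob {\<omega>'\<in>space M. Tt \<omega> \<le> Tt \<omega>'}) \<partial>M)"
    by (rule cumhaz_eq_integral) measurable
  also have "\<dots> = (\<integral>\<omega>. indicator {\<omega>\<in>space M. D \<omega> = j \<and> Tt \<omega> = T \<omega>} \<omega> *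
      (indicator {0<..t} (T \<omega>) / prob {\<omega>'\<in>space M. T \<omega> \<le> Tt \<omega>'}) \<partial>M)"
    using on_space j by (intro Bochner_Integration.integral_cong) (auto simp: indicator_def)
  also have "\<dots> = (\<integral>\<omega>. indicator {\<omega>\<in>space M. D \<omega> = j} \<omega> *
      (indicator {0<..t} (T \<omega>) / prob {\<omega>'\<in>space M. T \<omega> \<le> T \<omega>'}) \<partial>M)"
    using on_space by (intro integral_uncensored_eq[OF _ _ _ _ rep j tJ]) auto
  also have "\<dots> = cumhaz M T D j t"
    by (rule cumhaz_eq_integral[symmetric]) measurable
  finally show "cumhaz M Tt Dt j t = cumhaz M T D j t" .
qed

definition example_M :: "real measure" where
  "example_M = measure_pmf (pmf_of_set {0, 1})"

definition example_T :: "real \<Rightarrow> real" where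
  "example_T \<omega> = (if \<omega> = 0 then 2 else 3)"

definition example_Tt :: "real \<Rightarrow> real" where
  "example_Tt \<omega> = (if \<omega> = 0 then 1 else 1 / 2)"

lemma space_example_M[simp]: "space example_M = UNIV" and sets_example_M[simp]: "sets example_M = UNIV"
  by (simp_all add: example_M_def)

lemma prob_space_example_M: "prob_space example_M"
  unfolding example_M_def by (rule prob_space_measure_pmf)

lemma measure_example_M: "measure example_M A = card ({0, 1} \<inter> A) / 2"
  unfolding example_M_def by (subst measure_pmf_of_set) auto

lemma setting_example: "d \<ge> 1 \<Longrightarrow> setting d example_M example_T (\<lambda>_. 1) example_Tt (\<lambda>_. 0)"
  unfolding setting_def using prob_space_example_M
  by (auto simp: example_M_def example_T_def example_Tt_def)

lemma identifiable_example: "identifiable d example_M example_T (\<lambda>_. 1) example_Tt (\<lambda>_. 0)"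
  unfolding identifiable_def
proof (intro allI impI, elim conjE)
  interpret prob_space example_M
    by (rule prob_space_example_M)
  fix t j
  assume "t \<in> Jset example_M example_Tt" and "j \<in> {1..d}"
  have "t < 1"
  proof (rule ccontr)
    assume "\<not> t < 1"
    then have "{\<omega>\<in>space example_M. t < example_Tt \<omega>} = {}"
      by (auto simp: example_Tt_def)
    then show False
      using \<open>t \<in> Jset example_M example_Tt\<close> by (simp add: Jset_def survival_def)
  qed
  then have "indicator {0<..t} (example_T \<omega>) = (0::real)" for \<omega>
    by (simp add: example_T_def indicator_def)
  then show "cumhaz example_M example_Tt (\<lambda>_. 0) j t = cumhaz example_M example_T (\<lambda>_. 1) j t"
    using \<open>j \<in> {1..d}\<close> by (subst (1 2) cumhaz_eq_integral) (simp_all add: example_M_def)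
qed

lemma not_representative_example: "d \<ge> 1 \<Longrightarrow> \<not> representative d example_M example_T (\<lambda>_. 1) example_Tt"
proof
  assume "d \<ge> 1" and "representative d example_M example_T (\<lambda>_. 1) example_Tt"
  moreover have "1 / 2 \<in> Jset example_M example_Tt"
  proof -
    have "{\<omega>\<in>space example_M. 1 / 2 < example_Tt \<omega>} = {0}"
      by (auto simp: example_Tt_def)
    then show ?thesis
      by (simp add: Jset_def survival_def measure_example_M)
  qed
  ultimately have "condprob example_M {\<omega>\<in>space example_M. example_T \<omega> \<le> 2} {\<omega>\<in>space example_M. example_Tt \<omega> > 1 / 2}
      = condprob example_M {\<omega>\<in>space example_M. example_T \<omega> \<le> 2} {\<omega>\<in>space example_M. example_T \<omega> > 1 / 2}"
    unfolding representative_def by (elim allE[of _ 2] allE[of _ "1 / 2"] allE[of _ 1]) simp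
  moreover have "{\<omega>\<in>space example_M. example_T \<omega> \<le> 2} = {0}"
    "{\<omega>\<in>space example_M. example_Tt \<omega> > 1 / 2} = {0}"
    "{\<omega>\<in>space example_M. example_T \<omega> > 1 / 2} = UNIV"
    by (auto simp: example_T_def example_Tt_def)
  ultimately show False
    by (simp add: condprob_def measure_example_M)
qed

theorem proposition4:
  fixes d :: nat
  assumes "d \<ge> 1"
  shows "(\<forall>(M :: 'a measure) T D Tt Dt.
            setting d M T D Tt Dt \<longrightarrow> representative d M T D Tt \<longrightarrow>
            identifiable d M T D Tt Dt)
       \<and> (\<exists>(M :: real measure) T D Tt Dt.
            setting d M T D Tt Dt \<and> identifiable d M T D Tt Dt \<and>
            \<not> representative d M T D Tt)"
  using representative_imp_identifiable setting_example[OF assms] identifiable_example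
    not_representative_example[OF assms]
  by blast

end
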